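(* Let $k\in\mathbb{N}$ be even and let $n,m$ be odd integers. Then $K_{k,2}(n,m)=2K_{k,1}\left(\frac{n}{2},\frac{m}{2}\right)$.
   Context: For even $k\in\mathbb{N}$ put $k^*=4k$ if $\gcd(k,6)=2$ and $k^*=36k$ if $6\mid k$. For $a\in\{1,2\}$ and $n,m\in\frac12\mathbb{Z}$ define $$K_{k,a}(n,m)=\sum_{\substack{0\le h<ak\\ \gcd(h,ak)=1}} e^{\frac{2\pi i}{ak}(-nh+mh')},$$ where for each $h$, $h'$ is an integer with $hh'\equiv-1\pmod{k^*}$. *)

theory Defs
  imports Complex_Main "HOL-Number_Theory.Cong"
begin

(* k^* = 4k if gcd(k,6) = 2, and 36k if 6 divides k (only meaningful for even k) *)
definition kstar :: "nat \<Rightarrow> nat" where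
  "kstar k = (if gcd k 6 = 2 then 4 * k else 36 * k)"

definition hprime :: "nat \<Rightarrow> int \<Rightarrow> int" where
  "hprime k h = (SOME h'. [h * h' = - 1] (mod int (kstar k)))"

(* K_{k,a}(n,m), with n, m real (intended: half-integers) *)
definition Kloos :: "nat \<Rightarrow> nat \<Rightarrow> real \<Rightarrow> real \<Rightarrow> complex" where
  "Kloos k a n m =
     (\<Sum>h\<in>{h. h < a * k \<and> coprime h (a * k)}.
        exp (2 * pi * \<i> * complex_of_real
              ((- n * real h + m * real_of_int (hprime k (int h))) / real (a * k))))"

end

theory Submission
  imports Defs "HOL-Analysis.Complex_Transcendental"
begin

text \<open>Since \<open>k\<close> is even, the units modulo \<open>2k\<close> are exactly the \<open>h\<close> and \<open>h + k\<close> with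
  \<open>h\<close> a unit modulo \<open>k\<close>. Modulo \<open>2k\<close> one has \<open>(h + k)' \<equiv> h' + k\<close>, so the phase of the
  term at \<open>h + k\<close> exceeds that at \<open>h\<close> by \<open>(m - n)/2\<close>, an integer for odd \<open>n, m\<close>. Each
  pair therefore contributes twice the term at \<open>h\<close>, and that term is the term of
  \<open>K\<^sub>k\<^sub>,\<^sub>1(n/2, m/2)\<close> at \<open>h\<close>.\<close>

lemma kstar_eq_square_mult:
  assumes "even k"
  obtains d where "d dvd k" "kstar k = d\<^sup>2 * k"
proof (cases "3 dvd k")
  case True
  with assms have "6 dvd k" by presburger
  then have "gcd k 6 = 6" by (simp add: gcd_nat.absorb2)
  with \<open>6 dvd k\<close> show ?thesis by (intro that[of 6]) (simp_all add: kstar_def)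
next
  case False
  with assms have "k mod 6 = 2 \<or> k mod 6 = 4" by presburger
  moreover have "gcd k 6 = gcd 6 (k mod 6)" by (metis gcd_red_nat gcd.commute)
  ultimately have "gcd k 6 = 2" by (auto simp: gcd_non_0_nat)
  with assms show ?thesis by (intro that[of 2]) (simp_all add: kstar_def)
qed

lemma coprime_kstar_iff:
  fixes h :: int
  assumes "even k"
  shows "coprime h (int (kstar k)) \<longleftrightarrow> coprime h (int k)"
proof -
  obtain d where d: "d dvd k" "kstar k = d\<^sup>2 * k"
    using kstar_eq_square_mult[OF assms] by blast
  have "coprime h (int k) \<Longrightarrow> coprime h (int d)"
    using d(1) by (meson coprime_divisors dvd_refl of_nat_dvd_iff)
  with d(2) show ?thesis by auto
qed

lemma hprime_cong:
  fixes h :: int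
  assumes "even k" "coprime h (int k)"
  shows "[h * hprime k h = -1] (mod int (kstar k))"
proof -
  obtain x where "[h * x = 1] (mod int (kstar k))"
    using cong_solve_coprime_int coprime_kstar_iff assms by blast
  then have "[h * (-x) = -1] (mod int (kstar k))"
    by (simp add: cong_minus_minus_iff)
  then show ?thesis
    unfolding hprime_def by (rule someI)
qed

lemma hprime_cong_double:
  fixes h :: int
  assumes "even k" "coprime h (int k)"
  shows "[h * hprime k h = -1] (mod 2 * int k)"
  by (rule cong_dvd_modulus[OF hprime_cong[OF assms]]) (simp add: kstar_def)

lemma neg_inverse_shift_cong:
  fixes h k a b :: int
  assumes "even k" and a: "[h * a = -1] (mod 2 * k)" and b: "[(h + k) * b = -1] (mod 2 * k)"
  shows "[b = a + k] (mod 2 * k)"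
proof -
  have "coprime (h * a) (2 * k)"
    using cong_imp_coprime[OF cong_sym[OF a]] by simp
  then have coprime: "coprime h (2 * k)" by simp
  have "[h * a = -1] (mod 2)" "[(h + k) * b = -1] (mod 2)"
    using a b by (auto intro: cong_dvd_modulus)
  with \<open>even k\<close> have "odd h" "odd b"
    by (auto simp: cong_iff_dvd_diff)
  then have "2 * k dvd k * (b + h)" by auto
  with a b have "2 * k dvd ((h + k) * b + 1) - (h * a + 1) - k * (b + h)"
    by (intro dvd_diff) (simp_all add: cong_iff_dvd_diff)
  also have "\<dots> = h * (b - (a + k))"
    by (simp add: algebra_simps)
  finally have "2 * k dvd h * (b - (a + k))" .
  with coprime show ?thesis
    by (simp add: cong_iff_dvd_diff coprime_commute coprime_dvd_mult_right_iff)
qed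

lemma hprime_add_cong:
  fixes h :: int
  assumes "even k" "coprime h (int k)"
  shows "[hprime k (h + int k) = hprime k h + int k] (mod 2 * int k)"
proof -
  have "coprime (h + int k) (int k)"
    using assms(2) by (simp add: coprime_iff_gcd_eq_1)
  with assms show ?thesis
    by (intro neg_inverse_shift_cong[of k h] hprime_cong_double) simp_all
qed

lemma exp_2pi_i_add_of_int:
  "exp (2 * pi * \<i> * complex_of_real (x + of_int j)) = exp (2 * pi * \<i> * complex_of_real x)"
proof -
  have "2 * pi * \<i> * complex_of_real (x + of_int j)
      = 2 * pi * \<i> * complex_of_real x + \<i> * (of_int j * (of_real pi * 2))"
    by (simp add: algebra_simps)
  then show ?thesis by simp
qed

definition Kloos_term :: "nat \<Rightarrow> nat \<Rightarrow> real \<Rightarrow> real \<Rightarrow> nat \<Rightarrow> complex" where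
  "Kloos_term k a n m h =
     exp (2 * pi * \<i> * complex_of_real
       ((- n * real h + m * real_of_int (hprime k (int h))) / real (a * k)))"

lemma Kloos_eq_sum_Kloos_term:
  "Kloos k a n m = (\<Sum>h | h < a * k \<and> coprime h (a * k). Kloos_term k a n m h)"
  by (simp add: Kloos_def Kloos_term_def)

lemma Kloos_term_half: "Kloos_term k 1 (n / 2) (m / 2) h = Kloos_term k 2 n m h"
proof -
  have "(- (n / 2) * x + m / 2 * y) / real k = (- n * x + m * y) / real (2 * k)" for x y
    by (cases "k = 0") (simp_all add: field_simps)
  then show ?thesis by (simp add: Kloos_term_def)
qed

lemma Kloos_term_add:
  fixes n m :: int
  assumes "even k" "odd n" "odd m" "coprime h k"
  shows "Kloos_term k 2 n m (h + k) = Kloos_term k 2 n m h"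
proof (cases "k = 0")
  case False
  have "2 * int k dvd hprime k (int h + int k) - (hprime k (int h) + int k)"
    using hprime_add_cong[OF assms(1), of "int h"] assms(4) by (simp add: cong_iff_dvd_diff)
  then obtain t where "hprime k (int h + int k) - (hprime k (int h) + int k) = 2 * int k * t"
    by (rule dvdE)
  then have t: "hprime k (int h + int k) = hprime k (int h) + int k + 2 * int k * t"
    by linarith
  obtain a b where "n = 2 * a + 1" "m = 2 * b + 1"
    using assms(2,3) by (meson oddE)
  with t False have "(- of_int n * real (h + k) + of_int m * real_of_int (hprime k (int (h + k))))
        / real (2 * k)
      = (- of_int n * real h + of_int m * real_of_int (hprime k (int h))) / real (2 * k)
        + of_int (b - a + m * t)"
    by (simp add: field_simps)
  then show ?thesis
    unfolding Kloos_term_def by (simp only: exp_2pi_i_add_of_int)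
qed (simp add: Kloos_term_def)

lemma sum_periodic_filter_lessThan_double:
  fixes f :: "nat \<Rightarrow> 'a::comm_monoid_add"
  assumes "\<And>h. P (h + k) \<longleftrightarrow> P h"
  shows "(\<Sum>h | h < 2 * k \<and> P h. f h) = (\<Sum>h | h < k \<and> P h. f h + f (h + k))"
proof -
  define g where "g h = (if P h then f h else 0)" for h
  have filter: "(\<Sum>h | h < j \<and> P h. F h) = (\<Sum>h<j. if P h then F h else 0)"
    for j and F :: "nat \<Rightarrow> 'a"
    using sum.inter_filter[of "{..<j}" F P] by (simp add: conj_commute)
  have "(\<Sum>h<2 * k. g h) = (\<Sum>h<k. g h) + (\<Sum>h = k..<k + k. g h)"
    by (metis atLeast0LessThan le_add1 mult_2 sum.atLeastLessThan_concat zero_le)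
  also have "(\<Sum>h = k..<k + k. g h) = (\<Sum>h<k. g (h + k))"
    using sum.shift_bounds_nat_ivl[of g 0 k k] by (simp add: atLeast0LessThan)
  finally show ?thesis
    by (simp add: filter g_def assms sum.distrib[symmetric] if_distrib cong: if_cong)
qed

theorem lemma2p4:
  fixes k :: nat and n m :: int
  assumes "even k" and "odd n" and "odd m"
  shows "Kloos k 2 (of_int n) (of_int m) = 2 * Kloos k 1 (of_int n / 2) (of_int m / 2)"
proof -
  let ?T = "Kloos_term k 2 (of_int n) (of_int m)"
  have coprime_double: "coprime h (2 * k) \<longleftrightarrow> coprime h k" for h
    using \<open>even k\<close> by (auto intro: coprime_divisors)
  have "Kloos k 2 (of_int n) (of_int m) = (\<Sum>h | h < 2 * k \<and> coprime h k. ?T h)"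
    by (simp only: Kloos_eq_sum_Kloos_term coprime_double)
  also have "\<dots> = (\<Sum>h | h < k \<and> coprime h k. ?T h + ?T (h + k))"
    by (rule sum_periodic_filter_lessThan_double) (simp add: coprime_iff_gcd_eq_1)
  also have "\<dots> = (\<Sum>h | h < k \<and> coprime h k. 2 * ?T h)"
    using assms by (intro sum.cong) (simp_all add: Kloos_term_add)
  also have "\<dots> = 2 * Kloos k 1 (of_int n / 2) (of_int m / 2)"
    unfolding Kloos_eq_sum_Kloos_term Kloos_term_half sum_distrib_left by simp
  finally show ?thesis .
qed

end
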